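(* In the affine Schur category $\mathcal{AS}$ over a commutative ring $\Bbbk$, for all integers $a\ge1$, $0\le r\le a$ and all $u\in\Bbbk$: $$U_{a,u}\circ(\omega_{a,r}\otimes 1_u)=(1_u\otimes\omega_{a,r})\circ U_{a,u},\qquad D_{u,a}\circ(1_u\otimes\omega_{a,r})=(\omega_{a,r}\otimes1_u)\circ D_{u,a}.$$
   Context: Let $\Bbbk$ be a commutative ring with $1$. The affine Schur category $\mathcal{AS}$ is the strict $\Bbbk$-linear monoidal category defined as follows. Generating objects: the integers $a\ge1$ (black strands of thickness $a$) and the elements $u\in\Bbbk$ (red strands labelled $u$); objects are finite words in these, tensor product being concatenation, written $(x_1,\dots,x_k)$ or $x_1\otimes\cdots\otimes x_k$. Generating morphisms, for $a,b\ge1$, $u\in\Bbbk$: merge $M_{a,b}:(a,b)\to(a+b)$, split $S_{a,b}:(a+b)\to(a,b)$, crossing $X_{a,b}:(a,b)\to(b,a)$, dot $\omega_a:(a)\to(a)$, traverse-up $U_{a,u}:(a,u)\to(u,a)$, traverse-down $D_{u,a}:(u,a)\to(a,u)$. Conventions: a black strand of thickness $0$ is the unit object and any merge, split or crossing involving a thickness-$0$ strand is an identity; $1_x$ is an identity. Derived morphisms: $\omega_{a,0}:=1_a$; $\omega_{a,r}:=M_{r,a-r}\circ(\omega_r\otimes1_{a-r})\circ S_{r,a-r}$ for $1\le r\le a$ (so $\omega_{a,a}=\omega_a$); $\omega_{a,r}:=0$ if $r<0$ or $r>a$; $S^{(a)}:(a)\to(1,\dots,1)$ and $M^{(a)}:(1,\dots,1)\to(a)$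 are iterated splits/merges; $g_r(u):=\sum_{i=0}^{r}(-1)^i\big(\prod_{j=0}^{i-1}(u+j)\big)\omega_{r,r-i}\in\mathrm{End}(r)$. Defining relations, for all $a,b,c,d,r\ge1$, $u\in\Bbbk$: (R1) $M_{a+b,c}(M_{a,b}\otimes1_c)=M_{a,b+c}(1_a\otimes M_{b,c})$, $(S_{a,b}\otimes1_c)S_{a+b,c}=(1_a\otimes S_{b,c})S_{a,b+c}$; (R2) if $a+c=b+d$: $S_{b,d}M_{a,c}=\sum(M_{s,c-t}\otimes M_{a-s,t})(1_s\otimes X_{a-s,c-t}\otimes1_t)(S_{s,a-s}\otimes S_{c-t,t})$ over $0\le s\le\min(a,b)$, $0\le t\le\min(c,d)$, $t-s=d-a$; (R3) $M_{a,b}S_{a,b}=\binom{a+b}{a}1_{a+b}$; (R4) $(\omega_b\otimes1_a)X_{a,b}=\sum_{t=0}^{\min(a,b)}t!\,(M_{t,b-t}\otimes M_{a-t,t})(1_t\otimes X_{a-t,b-t}\otimes1_t)(1_t\otimes1_{a-t}\otimes\omega_{b-t}\otimes1_t)(S_{t,a-t}\otimes S_{b-t,t})$ and $X_{b,a}(\omega_b\otimes1_a)=\sum_{t=0}^{\min(a,b)}t!\,(M_{t,a-t}\otimes M_{b-t,t})(1_t\otimes1_{a-t}\otimes\omega_{b-t}\otimes1_t)(1_t\otimes X_{b-t,a-t}\otimes1_t)(S_{t,b-t}\otimes S_{a-t,t})$; (R5) $S_{a,b}\omega_{a+b}=(\omega_a\otimes\omega_b)S_{a,b}$, $\omega_{a+b}M_{a,b}=M_{a,b}(\omega_a\otimes\omega_b)$;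 (R6) $M^{(a)}(\omega_1\otimes\cdots\otimes\omega_1)S^{(a)}=a!\,\omega_a$; (R7) $D_{u,r}U_{r,u}=g_r(u)\otimes1_u$, $U_{r,u}D_{u,r}=1_u\otimes g_r(u)$; (R8) $(D_{u,b}\otimes1_a)(1_u\otimes X_{a,b})(U_{a,u}\otimes1_b)=(1_b\otimes U_{a,u})(X_{a,b}\otimes1_u)(1_a\otimes D_{u,b})+\sum_{t=1}^{\min(a,b)}t!\,(M_{t,b-t}\otimes1_u\otimes M_{a-t,t})(1_t\otimes1_{b-t}\otimes U_{a-t,u}\otimes1_t)(1_t\otimes X_{a-t,b-t}\otimes1_u\otimes1_t)(1_t\otimes1_{a-t}\otimes D_{u,b-t}\otimes1_t)(S_{t,a-t}\otimes1_u\otimes S_{b-t,t})$; (R9) $(1_u\otimes S_{b,c})U_{b+c,u}=(U_{b,u}\otimes1_c)(1_b\otimes U_{c,u})(S_{b,c}\otimes1_u)$, $(S_{a,b}\otimes1_u)D_{u,a+b}=(1_a\otimes D_{u,b})(D_{u,a}\otimes1_b)(1_u\otimes S_{a,b})$, $D_{u,b+c}(1_u\otimes M_{b,c})=(M_{b,c}\otimes1_u)(1_b\otimes D_{u,c})(D_{u,b}\otimes1_c)$, $U_{a+b,u}(M_{a,b}\otimes1_u)=(1_u\otimes M_{a,b})(U_{a,u}\otimes1_b)(1_a\otimes U_{b,u})$. *)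

theory Defs
  imports Main
begin

datatype 'k gob = Blk nat | Red 'k

type_synonym 'k ob = "'k gob list"

definition ok_ob :: "'k ob \<Rightarrow> bool" where
  "ok_ob x \<longleftrightarrow> (\<forall>g\<in>set x. g \<noteq> Blk 0)"

datatype 'k tm =
    Idt "'k ob" | Zer "'k ob" "'k ob"
  | Cmp "'k tm" "'k tm" | Tns "'k tm" "'k tm"
  | Pls "'k tm" "'k tm" | Scl 'k "'k tm"
  | Mg nat nat | Sp nat nat | Cr nat nat | Dt nat
  | Up nat 'k | Dn 'k nat

inductive hty :: "'k tm \<Rightarrow> 'k ob \<Rightarrow> 'k ob \<Rightarrow> bool" where
  "ok_ob x \<Longrightarrow> hty (Idt x) x x"
| "ok_ob x \<Longrightarrow> ok_ob y \<Longrightarrow> hty (Zer x y) x y"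
| "hty g x y \<Longrightarrow> hty f y z \<Longrightarrow> hty (Cmp f g) x z"
| "hty f x y \<Longrightarrow> hty g x' y' \<Longrightarrow> hty (Tns f g) (x @ x') (y @ y')"
| "hty f x y \<Longrightarrow> hty g x y \<Longrightarrow> hty (Pls f g) x y"
| "hty f x y \<Longrightarrow> hty (Scl c f) x y"
| "a \<ge> 1 \<Longrightarrow> b \<ge> 1 \<Longrightarrow> hty (Mg a b) [Blk a, Blk b] [Blk (a+b)]"
| "a \<ge> 1 \<Longrightarrow> b \<ge> 1 \<Longrightarrow> hty (Sp a b) [Blk (a+b)] [Blk a, Blk b]"
| "a \<ge> 1 \<Longrightarrow> b \<ge> 1 \<Longrightarrow> hty (Cr a b) [Blk a, Blk b] [Blk b, Blk a]"
| "a \<ge> 1 \<Longrightarrow> hty (Dt a) [Blk a] [Blk a]"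
| "a \<ge> 1 \<Longrightarrow> hty (Up a u) [Blk a, Red u] [Red u, Blk a]"
| "a \<ge> 1 \<Longrightarrow> hty (Dn u a) [Red u, Blk a] [Blk a, Red u]"

text \<open>Thickness-0 conventions: a black strand of thickness 0 is the unit object;
  merges, splits, crossings, dots and traverses involving it are identities.\<close>
definition blk :: "nat \<Rightarrow> 'k ob" where
  "blk a = (if a = 0 then [] else [Blk a])"
definition idb :: "nat \<Rightarrow> 'k tm" where "idb a = Idt (blk a)"
definition idr :: "'k \<Rightarrow> 'k tm" where "idr u = Idt [Red u]"
definition mg :: "nat \<Rightarrow> nat \<Rightarrow> 'k tm" where
  "mg a b = (if a = 0 \<or> b = 0 then Idt (blk (a+b)) else Mg a b)"
definition sp :: "nat \<Rightarrow> nat \<Rightarrow> 'k tm" where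
  "sp a b = (if a = 0 \<or> b = 0 then Idt (blk (a+b)) else Sp a b)"
definition cr :: "nat \<Rightarrow> nat \<Rightarrow> 'k tm" where
  "cr a b = (if a = 0 \<or> b = 0 then Idt (blk a @ blk b) else Cr a b)"
definition dt :: "nat \<Rightarrow> 'k tm" where
  "dt a = (if a = 0 then Idt [] else Dt a)"
definition up :: "nat \<Rightarrow> 'k \<Rightarrow> 'k tm" where
  "up a u = (if a = 0 then Idt [Red u] else Up a u)"
definition dn :: "'k \<Rightarrow> nat \<Rightarrow> 'k tm" where
  "dn u a = (if a = 0 then Idt [Red u] else Dn u a)"

fun tsum :: "'k ob \<Rightarrow> 'k ob \<Rightarrow> 'k tm list \<Rightarrow> 'k tm" where
  "tsum x y [] = Zer x y"
| "tsum x y (f # fs) = Pls f (tsum x y fs)"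

definition omg :: "nat \<Rightarrow> nat \<Rightarrow> 'k tm" where
  "omg a r = (if r = 0 then idb a
              else if r \<le> a then Cmp (mg r (a-r)) (Cmp (Tns (dt r) (idb (a-r))) (sp r (a-r)))
              else Zer (blk a) (blk a))"

definition gpol :: "nat \<Rightarrow> 'k::comm_ring_1 \<Rightarrow> 'k tm" where
  "gpol r u = tsum (blk r) (blk r)
     [Scl ((-1)^i * (\<Prod>j<i. u + of_nat j)) (omg r (r-i)). i \<leftarrow> [0..<r+1]]"

fun mit :: "nat \<Rightarrow> 'k tm" where
  "mit 0 = Idt []"
| "mit (Suc 0) = Idt [Blk 1]"
| "mit (Suc (Suc n)) = Cmp (Mg (Suc n) 1) (Tns (mit (Suc n)) (Idt [Blk 1]))"

fun sit :: "nat \<Rightarrow> 'k tm" where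
  "sit 0 = Idt []"
| "sit (Suc 0) = Idt [Blk 1]"
| "sit (Suc (Suc n)) = Cmp (Tns (sit (Suc n)) (Idt [Blk 1])) (Sp (Suc n) 1)"

fun dots :: "nat \<Rightarrow> 'k tm" where
  "dots 0 = Idt []"
| "dots (Suc n) = Tns (dots n) (Dt 1)"

text \<open>Axioms (unguarded; they are only used between well-typed terms of equal type).\<close>
inductive ax :: "'k::comm_ring_1 tm \<Rightarrow> 'k tm \<Rightarrow> bool" where
  c_assoc: "ax (Cmp (Cmp f g) h) (Cmp f (Cmp g h))"
| c_idl: "ax (Cmp (Idt y) f) f"
| c_idr: "ax (Cmp f (Idt x)) f"
| t_assoc: "ax (Tns (Tns f g) h) (Tns f (Tns g h))"
| t_unl: "ax (Tns (Idt []) f) f"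
| t_unr: "ax (Tns f (Idt [])) f"
| t_id: "ax (Tns (Idt x) (Idt y)) (Idt (x @ y))"
| t_interchange: "ax (Cmp (Tns f g) (Tns h k)) (Tns (Cmp f h) (Cmp g k))"
| p_assoc: "ax (Pls (Pls f g) h) (Pls f (Pls g h))"
| p_comm: "ax (Pls f g) (Pls g f)"
| p_zero: "ax (Pls f (Zer x y)) f"
| p_neg: "ax (Pls f (Scl (-1) f)) (Zer x y)"
| s_one: "ax (Scl 1 f) f"
| s_mult: "ax (Scl c (Scl d f)) (Scl (c*d) f)"
| s_addl: "ax (Scl (c+d) f) (Pls (Scl c f) (Scl d f))"
| s_addr: "ax (Scl c (Pls f g)) (Pls (Scl c f) (Scl c g))"
| cp_l: "ax (Cmp (Pls f g) h) (Pls (Cmp f h) (Cmp g h))"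
| cp_r: "ax (Cmp h (Pls f g)) (Pls (Cmp h f) (Cmp h g))"
| cs_l: "ax (Cmp (Scl c f) g) (Scl c (Cmp f g))"
| cs_r: "ax (Cmp f (Scl c g)) (Scl c (Cmp f g))"
| tp_l: "ax (Tns (Pls f g) h) (Pls (Tns f h) (Tns g h))"
| tp_r: "ax (Tns h (Pls f g)) (Pls (Tns h f) (Tns h g))"
| ts_l: "ax (Tns (Scl c f) g) (Scl c (Tns f g))"
| ts_r: "ax (Tns f (Scl c g)) (Scl c (Tns f g))"
| R1a: "a \<ge> 1 \<Longrightarrow> b \<ge> 1 \<Longrightarrow> c \<ge> 1 \<Longrightarrow>
    ax (Cmp (Mg (a+b) c) (Tns (Mg a b) (Idt [Blk c])))
       (Cmp (Mg a (b+c)) (Tns (Idt [Blk a]) (Mg b c)))"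
| R1b: "a \<ge> 1 \<Longrightarrow> b \<ge> 1 \<Longrightarrow> c \<ge> 1 \<Longrightarrow>
    ax (Cmp (Tns (Sp a b) (Idt [Blk c])) (Sp (a+b) c))
       (Cmp (Tns (Idt [Blk a]) (Sp b c)) (Sp a (b+c)))"
| R2: "a \<ge> 1 \<Longrightarrow> b \<ge> 1 \<Longrightarrow> c \<ge> 1 \<Longrightarrow> d \<ge> 1 \<Longrightarrow> a + c = b + d \<Longrightarrow>
    ax (Cmp (Sp b d) (Mg a c))
       (tsum [Blk a, Blk c] [Blk b, Blk d]
         [Cmp (Tns (mg s (c-t)) (mg (a-s) t))
              (Cmp (Tns (idb s) (Tns (cr (a-s) (c-t)) (idb t)))
                   (Tns (sp s (a-s)) (sp (c-t) t))).
          s \<leftarrow> [0..<min a b + 1], t \<leftarrow> [0..<min c d + 1],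
          int t - int s = int d - int a])"
| R3: "a \<ge> 1 \<Longrightarrow> b \<ge> 1 \<Longrightarrow>
    ax (Cmp (Mg a b) (Sp a b)) (Scl (of_nat ((a+b) choose a)) (Idt [Blk (a+b)]))"
| R4a: "a \<ge> 1 \<Longrightarrow> b \<ge> 1 \<Longrightarrow>
    ax (Cmp (Tns (Dt b) (Idt [Blk a])) (Cr a b))
       (tsum [Blk a, Blk b] [Blk b, Blk a]
         [Scl (of_nat (fact t))
            (Cmp (Tns (mg t (b-t)) (mg (a-t) t))
            (Cmp (Tns (idb t) (Tns (cr (a-t) (b-t)) (idb t)))
            (Cmp (Tns (idb t) (Tns (idb (a-t)) (Tns (dt (b-t)) (idb t))))
                 (Tns (sp t (a-t)) (sp (b-t) t))))).
          t \<leftarrow> [0..<min a b + 1]])"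
| R4b: "a \<ge> 1 \<Longrightarrow> b \<ge> 1 \<Longrightarrow>
    ax (Cmp (Cr b a) (Tns (Dt b) (Idt [Blk a])))
       (tsum [Blk b, Blk a] [Blk a, Blk b]
         [Scl (of_nat (fact t))
            (Cmp (Tns (mg t (a-t)) (mg (b-t) t))
            (Cmp (Tns (idb t) (Tns (idb (a-t)) (Tns (dt (b-t)) (idb t))))
            (Cmp (Tns (idb t) (Tns (cr (b-t) (a-t)) (idb t)))
                 (Tns (sp t (b-t)) (sp (a-t) t))))).
          t \<leftarrow> [0..<min a b + 1]])"
| R5a: "a \<ge> 1 \<Longrightarrow> b \<ge> 1 \<Longrightarrow>
    ax (Cmp (Sp a b) (Dt (a+b))) (Cmp (Tns (Dt a) (Dt b)) (Sp a b))"
| R5b: "a \<ge> 1 \<Longrightarrow> b \<ge> 1 \<Longrightarrow>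
    ax (Cmp (Dt (a+b)) (Mg a b)) (Cmp (Mg a b) (Tns (Dt a) (Dt b)))"
| R6: "a \<ge> 1 \<Longrightarrow>
    ax (Cmp (mit a) (Cmp (dots a) (sit a))) (Scl (of_nat (fact a)) (Dt a))"
| R7a: "r \<ge> 1 \<Longrightarrow> ax (Cmp (Dn u r) (Up r u)) (Tns (gpol r u) (idr u))"
| R7b: "r \<ge> 1 \<Longrightarrow> ax (Cmp (Up r u) (Dn u r)) (Tns (idr u) (gpol r u))"
| R8: "a \<ge> 1 \<Longrightarrow> b \<ge> 1 \<Longrightarrow>
    ax (Cmp (Tns (Dn u b) (Idt [Blk a]))
        (Cmp (Tns (idr u) (Cr a b)) (Tns (Up a u) (Idt [Blk b]))))
       (Pls (Cmp (Tns (Idt [Blk b]) (Up a u))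
             (Cmp (Tns (Cr a b) (idr u)) (Tns (Idt [Blk a]) (Dn u b))))
          (tsum [Blk a, Red u, Blk b] [Blk b, Red u, Blk a]
            [Scl (of_nat (fact t))
              (Cmp (Tns (mg t (b-t)) (Tns (idr u) (mg (a-t) t)))
              (Cmp (Tns (idb t) (Tns (idb (b-t)) (Tns (up (a-t) u) (idb t))))
              (Cmp (Tns (idb t) (Tns (cr (a-t) (b-t)) (Tns (idr u) (idb t))))
              (Cmp (Tns (idb t) (Tns (idb (a-t)) (Tns (dn u (b-t)) (idb t))))
                   (Tns (sp t (a-t)) (Tns (idr u) (sp (b-t) t))))))).
             t \<leftarrow> [1..<min a b + 1]]))"
| R9a: "b \<ge> 1 \<Longrightarrow> c \<ge> 1 \<Longrightarrow>
    ax (Cmp (Tns (idr u) (Sp b c)) (Up (b+c) u))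
       (Cmp (Tns (Up b u) (Idt [Blk c])) (Cmp (Tns (Idt [Blk b]) (Up c u)) (Tns (Sp b c) (idr u))))"
| R9b: "a \<ge> 1 \<Longrightarrow> b \<ge> 1 \<Longrightarrow>
    ax (Cmp (Tns (Sp a b) (idr u)) (Dn u (a+b)))
       (Cmp (Tns (Idt [Blk a]) (Dn u b)) (Cmp (Tns (Dn u a) (Idt [Blk b])) (Tns (idr u) (Sp a b))))"
| R9c: "b \<ge> 1 \<Longrightarrow> c \<ge> 1 \<Longrightarrow>
    ax (Cmp (Dn u (b+c)) (Tns (idr u) (Mg b c)))
       (Cmp (Tns (Mg b c) (idr u)) (Cmp (Tns (Idt [Blk b]) (Dn u c)) (Tns (Dn u b) (Idt [Blk c]))))"
| R9d: "a \<ge> 1 \<Longrightarrow> b \<ge> 1 \<Longrightarrow>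
    ax (Cmp (Up (a+b) u) (Tns (Mg a b) (idr u)))
       (Cmp (Tns (idr u) (Mg a b)) (Cmp (Tns (Up a u) (Idt [Blk b])) (Tns (Idt [Blk a]) (Up b u))))"

inductive AS_eq :: "'k::comm_ring_1 ob \<Rightarrow> 'k ob \<Rightarrow> 'k tm \<Rightarrow> 'k tm \<Rightarrow> bool" where
  eq_ax: "ax f g \<Longrightarrow> hty f x y \<Longrightarrow> hty g x y \<Longrightarrow> AS_eq x y f g"
| eq_refl: "hty f x y \<Longrightarrow> AS_eq x y f f"
| eq_sym: "AS_eq x y f g \<Longrightarrow> AS_eq x y g f"
| eq_trans: "AS_eq x y f g \<Longrightarrow> AS_eq x y g h \<Longrightarrow> AS_eq x y f h"
| eq_cmp: "AS_eq y z f f' \<Longrightarrow> AS_eq x y g g' \<Longrightarrow> AS_eq x z (Cmp f g) (Cmp f' g')"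
| eq_tns: "AS_eq x y f f' \<Longrightarrow> AS_eq x' y' g g' \<Longrightarrow> AS_eq (x @ x') (y @ y') (Tns f g) (Tns f' g')"
| eq_pls: "AS_eq x y f f' \<Longrightarrow> AS_eq x y g g' \<Longrightarrow> AS_eq x y (Pls f g) (Pls f' g')"
| eq_scl: "AS_eq x y f f' \<Longrightarrow> AS_eq x y (Scl c f) (Scl c f')"

end

theory Submission
  imports Defs
begin

text \<open>Say that an endomorphism f of the strand a slides through U_{a,u} if
  U_{a,u} (f \<otimes> 1_u) = (1_u \<otimes> f) U_{a,u}. Such endomorphisms form a submodule containing
  the identity, and g_a(u) is one of them, because by (R7) U (g_a(u) \<otimes> 1) = U D U = (1 \<otimes> g_a(u)) U.
  By (R9) merges and splits slide through U_{r+s,u}, turning it into the pair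
  (U_{r,u} \<otimes> 1_s)(1_r \<otimes> U_{s,u}); so \<omega>_{r+s,r} = M (\<omega>_r \<otimes> 1_s) S slides as soon as
  \<omega>_r slides through U_{r,u}. By induction on a, all \<omega>_{a,r} with r < a slide, hence so does
  \<omega>_a = g_a(u) - \<Sum>_{i \<ge> 1} (-1)^i u(u+1)...(u+i-1) \<omega>_{a,a-i}.
  The argument for D_{u,a} is the mirror image, using the other halves of (R7) and (R9).\<close>

fun src :: "'k tm \<Rightarrow> 'k ob" where
  "src (Idt x) = x" | "src (Zer x y) = x" | "src (Cmp f g) = src g"
| "src (Tns f g) = src f @ src g" | "src (Pls f g) = src f" | "src (Scl c f) = src f"
| "src (Mg a b) = [Blk a, Blk b]" | "src (Sp a b) = [Blk (a+b)]" | "src (Cr a b) = [Blk a, Blk b]"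
| "src (Dt a) = [Blk a]" | "src (Up a u) = [Blk a, Red u]" | "src (Dn u a) = [Red u, Blk a]"

fun tgt :: "'k tm \<Rightarrow> 'k ob" where
  "tgt (Idt x) = x" | "tgt (Zer x y) = y" | "tgt (Cmp f g) = tgt f"
| "tgt (Tns f g) = tgt f @ tgt g" | "tgt (Pls f g) = tgt f" | "tgt (Scl c f) = tgt f"
| "tgt (Mg a b) = [Blk (a+b)]" | "tgt (Sp a b) = [Blk a, Blk b]" | "tgt (Cr a b) = [Blk b, Blk a]"
| "tgt (Dt a) = [Blk a]" | "tgt (Up a u) = [Red u, Blk a]" | "tgt (Dn u a) = [Blk a, Red u]"

fun wf_tm :: "'k tm \<Rightarrow> bool" where
  "wf_tm (Idt x) = ok_ob x" | "wf_tm (Zer x y) = (ok_ob x \<and> ok_ob y)"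
| "wf_tm (Cmp f g) = (wf_tm f \<and> wf_tm g \<and> src f = tgt g)"
| "wf_tm (Tns f g) = (wf_tm f \<and> wf_tm g)"
| "wf_tm (Pls f g) = (wf_tm f \<and> wf_tm g \<and> src f = src g \<and> tgt f = tgt g)"
| "wf_tm (Scl c f) = wf_tm f"
| "wf_tm (Mg a b) = (1 \<le> a \<and> 1 \<le> b)" | "wf_tm (Sp a b) = (1 \<le> a \<and> 1 \<le> b)"
| "wf_tm (Cr a b) = (1 \<le> a \<and> 1 \<le> b)" | "wf_tm (Dt a) = (1 \<le> a)"
| "wf_tm (Up a u) = (1 \<le> a)" | "wf_tm (Dn u a) = (1 \<le> a)"

lemma ok_ob_simps [simp]:
  "ok_ob []" "ok_ob (Red u # x) = ok_ob x" "ok_ob (Blk a # x) = (a \<noteq> 0 \<and> ok_ob x)"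
  "ok_ob (x @ y) = (ok_ob x \<and> ok_ob y)"
  by (auto simp: ok_ob_def)

lemma wf_tm_ok_ob: "wf_tm f \<Longrightarrow> ok_ob (src f) \<and> ok_ob (tgt f)"
  by (induction f) auto

lemma hty_iff_wf_tm: "hty f x y \<longleftrightarrow> wf_tm f \<and> src f = x \<and> tgt f = y"
proof
  show "hty f x y \<Longrightarrow> wf_tm f \<and> src f = x \<and> tgt f = y"
    by (induction rule: hty.induct) auto
  show "wf_tm f \<and> src f = x \<and> tgt f = y \<Longrightarrow> hty f x y"
  proof (induction f arbitrary: x y)
    case (Tns f g)
    then show ?case using hty.intros(4)[of f "src f" "tgt f" g "src g" "tgt g"] by auto
  qed (auto intro: hty.intros)
qed

lemma AS_eq_hty: "AS_eq x y f g \<Longrightarrow> hty f x y \<and> hty g x y"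
  by (induction rule: AS_eq.induct) (auto intro: hty.intros)

definition eqv :: "'k::comm_ring_1 tm \<Rightarrow> 'k tm \<Rightarrow> bool" where
  "eqv f g \<longleftrightarrow> AS_eq (src f) (tgt f) f g"

lemma eqv_wf: "eqv f g \<Longrightarrow> wf_tm f \<and> wf_tm g \<and> src g = src f \<and> tgt g = tgt f"
  unfolding eqv_def by (drule AS_eq_hty) (simp add: hty_iff_wf_tm)

lemma eqv_refl: "wf_tm f \<Longrightarrow> eqv f f"
  unfolding eqv_def by (rule eq_refl) (simp add: hty_iff_wf_tm)

lemma eqv_sym: "eqv f g \<Longrightarrow> eqv g f"
  using eqv_wf[of f g] unfolding eqv_def by (auto intro: eq_sym)

lemma eqv_trans [trans]: "eqv f g \<Longrightarrow> eqv g h \<Longrightarrow> eqv f h"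
  using eqv_wf[of f g] unfolding eqv_def by (auto intro: eq_trans)

lemma eqv_ax: "ax f g \<Longrightarrow> wf_tm f \<Longrightarrow> wf_tm g \<Longrightarrow> src g = src f \<Longrightarrow> tgt g = tgt f \<Longrightarrow> eqv f g"
  unfolding eqv_def by (rule eq_ax) (auto simp: hty_iff_wf_tm)

lemma eqv_Cmp: "eqv f f' \<Longrightarrow> eqv g g' \<Longrightarrow> src f = tgt g \<Longrightarrow> eqv (Cmp f g) (Cmp f' g')"
  unfolding eqv_def by (auto intro: eq_cmp)

lemma eqv_Tns: "eqv f f' \<Longrightarrow> eqv g g' \<Longrightarrow> eqv (Tns f g) (Tns f' g')"
  unfolding eqv_def by (auto intro: eq_tns)

lemma eqv_Pls: "eqv f f' \<Longrightarrow> eqv g g' \<Longrightarrow> src f = src g \<Longrightarrow> tgt f = tgt g \<Longrightarrow> eqv (Pls f g) (Pls f' g')"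
  unfolding eqv_def by (auto intro: eq_pls)

lemma eqv_Scl: "eqv f f' \<Longrightarrow> eqv (Scl c f) (Scl c f')"
  unfolding eqv_def by (auto intro: eq_scl)

lemma eqv_Cmp_assoc: "wf_tm (Cmp (Cmp f g) h) \<Longrightarrow> eqv (Cmp (Cmp f g) h) (Cmp f (Cmp g h))"
  by (rule eqv_ax[OF ax.c_assoc]) auto

lemma eqv_Idt_Cmp: "wf_tm f \<Longrightarrow> eqv (Cmp (Idt (tgt f)) f) f"
  using wf_tm_ok_ob[of f] by (intro eqv_ax[OF ax.c_idl]) auto

lemma eqv_Cmp_Idt: "wf_tm f \<Longrightarrow> eqv (Cmp f (Idt (src f))) f"
  using wf_tm_ok_ob[of f] by (intro eqv_ax[OF ax.c_idr]) auto

lemma eqv_Tns_assoc: "wf_tm (Tns (Tns f g) h) \<Longrightarrow> eqv (Tns (Tns f g) h) (Tns f (Tns g h))"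
  by (rule eqv_ax[OF ax.t_assoc]) auto

lemma eqv_Tns_Idt: "ok_ob x \<Longrightarrow> ok_ob y \<Longrightarrow> eqv (Tns (Idt x) (Idt y)) (Idt (x @ y))"
  by (rule eqv_ax[OF ax.t_id]) auto

lemma eqv_interchange: "wf_tm (Cmp (Tns f g) (Tns h k)) \<Longrightarrow> src f = tgt h \<Longrightarrow>
  eqv (Cmp (Tns f g) (Tns h k)) (Tns (Cmp f h) (Cmp g k))"
  by (rule eqv_ax[OF ax.t_interchange]) auto

lemma eqv_Tns_Idt_Idt:
  assumes "wf_tm f" "ok_ob x" "ok_ob y"
  shows "eqv (Tns (Tns f (Idt x)) (Idt y)) (Tns f (Idt (x @ y)))"
proof -
  have "eqv (Tns (Tns f (Idt x)) (Idt y)) (Tns f (Tns (Idt x) (Idt y)))"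
    using assms by (intro eqv_Tns_assoc) simp
  also have "eqv \<dots> (Tns f (Idt (x @ y)))"
    using assms by (intro eqv_Tns eqv_refl eqv_Tns_Idt)
  finally show ?thesis .
qed

lemma eqv_Pls_cancel_right:
  assumes "eqv (Pls f h) (Pls g h)" shows "eqv f g"
proof -
  have ty: "wf_tm f" "wf_tm g" "wf_tm h" "src f = src h" "tgt f = tgt h" "src g = src h" "tgt g = tgt h"
    using eqv_wf[OF assms] by auto
  let ?Z = "Zer (src f) (tgt f)" and ?h' = "Scl (-1) h"
  have ok: "ok_ob (src f)" "ok_ob (tgt f)" using wf_tm_ok_ob ty(1) by auto
  have neg: "eqv (Pls h ?h') ?Z"
    using ty ok by (intro eqv_ax[OF ax.p_neg]) auto
  have "eqv f (Pls f ?Z)"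
    using ty ok by (intro eqv_sym[OF eqv_ax[OF ax.p_zero]]) auto
  also have "eqv \<dots> (Pls f (Pls h ?h'))"
    using ty by (intro eqv_Pls eqv_refl eqv_sym[OF neg]) auto
  also have "eqv \<dots> (Pls (Pls f h) ?h')"
    using ty by (intro eqv_sym[OF eqv_ax[OF ax.p_assoc]]) auto
  also have "eqv \<dots> (Pls (Pls g h) ?h')"
    using ty by (intro eqv_Pls assms eqv_refl) auto
  also have "eqv \<dots> (Pls g (Pls h ?h'))"
    using ty by (intro eqv_ax[OF ax.p_assoc]) auto
  also have "eqv \<dots> (Pls g ?Z)"
    using ty by (intro eqv_Pls eqv_refl neg) auto
  also have "eqv \<dots> g"
    using ty ok by (intro eqv_ax[OF ax.p_zero]) auto
  finally show ?thesis .
qed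

definition intertwines :: "'k::comm_ring_1 tm \<Rightarrow> 'k tm \<Rightarrow> 'k tm \<Rightarrow> 'k tm \<Rightarrow> bool" where
  "intertwines W F G W' \<longleftrightarrow> eqv (Cmp W F) (Cmp G W')"

lemma intertwines_wf:
  "intertwines W F G W' \<Longrightarrow> wf_tm W \<and> wf_tm F \<and> wf_tm G \<and> wf_tm W'
    \<and> tgt F = src W \<and> src F = src W' \<and> tgt G = tgt W \<and> src G = tgt W'"
  unfolding intertwines_def by (drule eqv_wf) simp

lemma intertwines_Cmp:
  assumes "intertwines W1 F G W2" "intertwines W2 F' G' W3"
  shows "intertwines W1 (Cmp F F') (Cmp G G') W3"
proof -
  note ty = intertwines_wf[OF assms(1)] intertwines_wf[OF assms(2)]
  have "eqv (Cmp W1 (Cmp F F')) (Cmp (Cmp W1 F) F')"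
    using ty by (intro eqv_sym[OF eqv_Cmp_assoc]) auto
  also have "eqv \<dots> (Cmp (Cmp G W2) F')"
    by (rule eqv_Cmp[OF assms(1)[unfolded intertwines_def] eqv_refl]) (use ty in auto)
  also have "eqv \<dots> (Cmp G (Cmp W2 F'))"
    using ty by (intro eqv_Cmp_assoc) auto
  also have "eqv \<dots> (Cmp G (Cmp G' W3))"
    by (rule eqv_Cmp[OF eqv_refl assms(2)[unfolded intertwines_def]]) (use ty in auto)
  also have "eqv \<dots> (Cmp (Cmp G G') W3)"
    using ty by (intro eqv_sym[OF eqv_Cmp_assoc]) auto
  finally show ?thesis unfolding intertwines_def .
qed

lemma intertwines_Cmp_intertwiners:
  assumes "intertwines V2 F H V2'" "intertwines V1 H G V1'"
  shows "intertwines (Cmp V1 V2) F G (Cmp V1' V2')"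
proof -
  note ty = intertwines_wf[OF assms(1)] intertwines_wf[OF assms(2)]
  have "eqv (Cmp (Cmp V1 V2) F) (Cmp V1 (Cmp V2 F))"
    using ty by (intro eqv_Cmp_assoc) auto
  also have "eqv \<dots> (Cmp V1 (Cmp H V2'))"
    by (rule eqv_Cmp[OF eqv_refl assms(1)[unfolded intertwines_def]]) (use ty in auto)
  also have "eqv \<dots> (Cmp (Cmp V1 H) V2')"
    using ty by (intro eqv_sym[OF eqv_Cmp_assoc]) auto
  also have "eqv \<dots> (Cmp (Cmp G V1') V2')"
    by (rule eqv_Cmp[OF assms(2)[unfolded intertwines_def] eqv_refl]) (use ty in auto)
  also have "eqv \<dots> (Cmp G (Cmp V1' V2'))"
    using ty by (intro eqv_Cmp_assoc) auto
  finally show ?thesis unfolding intertwines_def .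
qed

lemma intertwines_Tns:
  assumes "intertwines W F G W'" "intertwines V F' G' V'"
  shows "intertwines (Tns W V) (Tns F F') (Tns G G') (Tns W' V')"
proof -
  note ty = intertwines_wf[OF assms(1)] intertwines_wf[OF assms(2)]
  have "eqv (Cmp (Tns W V) (Tns F F')) (Tns (Cmp W F) (Cmp V F'))"
    using ty by (intro eqv_interchange) auto
  also have "eqv \<dots> (Tns (Cmp G W') (Cmp G' V'))"
    using assms unfolding intertwines_def by (rule eqv_Tns)
  also have "eqv \<dots> (Cmp (Tns G G') (Tns W' V'))"
    using ty by (intro eqv_sym[OF eqv_interchange]) auto
  finally show ?thesis unfolding intertwines_def .
qed

lemma intertwines_cong:
  assumes "intertwines W F G W'" "eqv F F'" "eqv G G'"
  shows "intertwines W F' G' W'"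
proof -
  note ty = intertwines_wf[OF assms(1)] eqv_wf[OF assms(2)] eqv_wf[OF assms(3)]
  have "eqv (Cmp W F') (Cmp W F)"
    by (rule eqv_Cmp[OF eqv_refl eqv_sym[OF assms(2)]]) (use ty in auto)
  also have "eqv \<dots> (Cmp G W')"
    using assms(1) unfolding intertwines_def .
  also have "eqv \<dots> (Cmp G' W')"
    by (rule eqv_Cmp[OF assms(3) eqv_refl]) (use ty in auto)
  finally show ?thesis unfolding intertwines_def .
qed

lemma intertwines_Idt: "wf_tm W \<Longrightarrow> intertwines W (Idt (src W)) (Idt (tgt W)) W"
  unfolding intertwines_def by (rule eqv_trans[OF eqv_Cmp_Idt eqv_sym[OF eqv_Idt_Cmp]])

lemma Idt_intertwines: "wf_tm f \<Longrightarrow> src f = tgt f \<Longrightarrow> intertwines (Idt (src f)) f f (Idt (src f))"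
  unfolding intertwines_def by (metis eqv_trans eqv_sym eqv_Cmp_Idt eqv_Idt_Cmp)

lemma intertwines_Pls:
  assumes "intertwines W F G W'" "intertwines W F' G' W'"
  shows "intertwines W (Pls F F') (Pls G G') W'"
proof -
  note ty = intertwines_wf[OF assms(1)] intertwines_wf[OF assms(2)]
  have "eqv (Cmp W (Pls F F')) (Pls (Cmp W F) (Cmp W F'))"
    using ty by (intro eqv_ax[OF ax.cp_r]) auto
  also have "eqv \<dots> (Pls (Cmp G W') (Cmp G' W'))"
    using assms ty unfolding intertwines_def by (intro eqv_Pls) auto
  also have "eqv \<dots> (Cmp (Pls G G') W')"
    using ty by (intro eqv_sym[OF eqv_ax[OF ax.cp_l]]) auto
  finally show ?thesis unfolding intertwines_def .
qed

lemma intertwines_Scl: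
  assumes "intertwines W F G W'"
  shows "intertwines W (Scl c F) (Scl c G) W'"
proof -
  note ty = intertwines_wf[OF assms]
  have "eqv (Cmp W (Scl c F)) (Scl c (Cmp W F))"
    using ty by (intro eqv_ax[OF ax.cs_r]) auto
  also have "eqv \<dots> (Scl c (Cmp G W'))"
    using assms unfolding intertwines_def by (rule eqv_Scl)
  also have "eqv \<dots> (Cmp (Scl c G) W')"
    using ty by (intro eqv_sym[OF eqv_ax[OF ax.cs_l]]) auto
  finally show ?thesis unfolding intertwines_def .
qed

lemma intertwines_cancel:
  assumes "intertwines W (Pls F F') (Pls G G') W'" "intertwines W F' G' W'"
  shows "intertwines W F G W'"
proof -
  note ty = intertwines_wf[OF assms(1)] intertwines_wf[OF assms(2)]
  have "eqv (Pls (Cmp W F) (Cmp W F')) (Cmp W (Pls F F'))"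
    using ty by (intro eqv_sym[OF eqv_ax[OF ax.cp_r]]) auto
  also have "eqv \<dots> (Cmp (Pls G G') W')"
    using assms(1) unfolding intertwines_def .
  also have "eqv \<dots> (Pls (Cmp G W') (Cmp G' W'))"
    using ty by (intro eqv_ax[OF ax.cp_l]) auto
  also have "eqv \<dots> (Pls (Cmp G W') (Cmp W F'))"
    by (rule eqv_Pls[OF eqv_refl eqv_sym[OF assms(2)[unfolded intertwines_def]]]) (use ty in auto)
  finally show ?thesis unfolding intertwines_def by (rule eqv_Pls_cancel_right)
qed

definition whiskering :: "'k ob \<Rightarrow> ('k tm \<Rightarrow> 'k tm) \<Rightarrow> bool" where
  "whiskering x L \<longleftrightarrow> ok_ob x \<and> (L = (\<lambda>f. Tns f (Idt x)) \<or> L = Tns (Idt x))"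

lemma whiskering_wf: "whiskering x L \<Longrightarrow> wf_tm (L f) = wf_tm f"
  unfolding whiskering_def by auto

lemma whiskering_obE:
  assumes "whiskering x L"
  obtains \<phi> where "inj \<phi>" "\<And>f. src (L f) = \<phi> (src f)" "\<And>f. tgt (L f) = \<phi> (tgt f)"
proof (cases "L = Tns (Idt x)")
  case True
  show ?thesis by (rule that[of "(@) x"]) (auto simp: True inj_def)
next
  case False
  with assms have "L = (\<lambda>f. Tns f (Idt x))" unfolding whiskering_def by blast
  show ?thesis by (rule that[of "\<lambda>y. y @ x"]) (auto simp: \<open>L = _\<close> inj_def)
qed

lemma whiskering_cong: "whiskering x L \<Longrightarrow> eqv f g \<Longrightarrow> eqv (L f) (L g)"
  unfolding whiskering_def by (auto intro!: eqv_Tns eqv_refl)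

lemma whiskering_Pls: "whiskering x L \<Longrightarrow> wf_tm (Pls f g) \<Longrightarrow> eqv (L (Pls f g)) (Pls (L f) (L g))"
  unfolding whiskering_def by (auto intro: eqv_ax ax.tp_l ax.tp_r)

lemma whiskering_Scl: "whiskering x L \<Longrightarrow> wf_tm f \<Longrightarrow> eqv (L (Scl c f)) (Scl c (L f))"
  unfolding whiskering_def by (auto intro: eqv_ax ax.ts_l ax.ts_r)

lemma whiskering_Cmp: "whiskering x L \<Longrightarrow> wf_tm (Cmp f g) \<Longrightarrow> eqv (Cmp (L f) (L g)) (L (Cmp f g))"
  unfolding whiskering_def
  by (auto intro!: eqv_trans[OF eqv_interchange] eqv_Tns eqv_refl eqv_Idt_Cmp[of "Idt x", simplified])

lemma whiskering_Idt: "whiskering x L \<Longrightarrow> ok_ob y \<Longrightarrow> eqv (L (Idt y)) (Idt (src (L (Idt y))))"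
  unfolding whiskering_def by (auto intro: eqv_Tns_Idt)

locale whiskering_pair =
  fixes x :: "'k::comm_ring_1 ob" and L R :: "'k tm \<Rightarrow> 'k tm"
  assumes whiskering_L: "whiskering x L" and whiskering_R: "whiskering x R"
begin

definition slides :: "'k tm \<Rightarrow> 'k tm \<Rightarrow> bool" where
  "slides W f \<longleftrightarrow> intertwines W (L f) (R f) W"

lemma slides_wf: "slides W f \<Longrightarrow> wf_tm f"
  unfolding slides_def by (drule intertwines_wf) (simp add: whiskering_wf[OF whiskering_L])

lemma slides_same_ob:
  assumes "slides W f" "slides W g" shows "src f = src g" "tgt f = tgt g"
proof -
  obtain \<phi> where \<phi>: "inj \<phi>" "\<And>f. src (L f) = \<phi> (src f)" "\<And>f. tgt (L f) = \<phi> (tgt f)"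
    using whiskering_obE[OF whiskering_L] by blast
  have "\<phi> (src f) = \<phi> (src g)" "\<phi> (tgt f) = \<phi> (tgt g)"
    using assms[unfolded slides_def, THEN intertwines_wf] unfolding \<phi>(2,3)[symmetric] by simp_all
  then show "src f = src g" "tgt f = tgt g" using \<phi>(1) by (simp_all add: inj_eq)
qed

lemma slides_cong:
  assumes "slides W f" "eqv f g" shows "slides W g"
  using assms(1) unfolding slides_def
  by (rule intertwines_cong[OF _ whiskering_cong[OF whiskering_L assms(2)]
        whiskering_cong[OF whiskering_R assms(2)]])

lemma slides_Pls:
  assumes "slides W f" "slides W g" shows "slides W (Pls f g)"
proof -
  have wf: "wf_tm (Pls f g)"
    using slides_wf[OF assms(1)] slides_wf[OF assms(2)] slides_same_ob[OF assms] by simp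
  have "intertwines W (Pls (L f) (L g)) (Pls (R f) (R g)) W"
    using assms unfolding slides_def by (rule intertwines_Pls)
  then show ?thesis unfolding slides_def
    by (rule intertwines_cong[OF _ eqv_sym[OF whiskering_Pls[OF whiskering_L wf]]
          eqv_sym[OF whiskering_Pls[OF whiskering_R wf]]])
qed

lemma slides_Scl:
  assumes "slides W f" shows "slides W (Scl c f)"
proof -
  have wf: "wf_tm f" using assms by (rule slides_wf)
  have "intertwines W (Scl c (L f)) (Scl c (R f)) W"
    using assms unfolding slides_def by (rule intertwines_Scl)
  then show ?thesis unfolding slides_def
    by (rule intertwines_cong[OF _ eqv_sym[OF whiskering_Scl[OF whiskering_L wf]]
          eqv_sym[OF whiskering_Scl[OF whiskering_R wf]]])
qed

lemma slides_cancel: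
  assumes "slides W (Pls f g)" "slides W g" shows "slides W f"
proof -
  have wf: "wf_tm (Pls f g)" using assms(1) by (rule slides_wf)
  have "intertwines W (Pls (L f) (L g)) (Pls (R f) (R g)) W"
    using assms(1) unfolding slides_def
    by (rule intertwines_cong[OF _ whiskering_Pls[OF whiskering_L wf] whiskering_Pls[OF whiskering_R wf]])
  then show ?thesis using assms(2) unfolding slides_def by (rule intertwines_cancel)
qed

lemma slides_Zer:
  assumes "slides W f" shows "slides W (Zer (src f) (tgt f))"
proof -
  have wf: "wf_tm f" using assms by (rule slides_wf)
  have "slides W (Pls f (Scl (-1) f))" using assms by (intro slides_Pls slides_Scl)
  then show ?thesis
    by (rule slides_cong) (use wf wf_tm_ok_ob[OF wf] in \<open>auto intro: eqv_ax[OF ax.p_neg]\<close>)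
qed

lemma slides_tsum: "slides W (Zer y z) \<Longrightarrow> \<forall>f\<in>set fs. slides W f \<Longrightarrow> slides W (tsum y z fs)"
  by (induction fs) (auto intro: slides_Pls)

lemma slides_Idt:
  assumes "wf_tm W" "ok_ob y" "src (L (Idt y)) = src W" "tgt (R (Idt y)) = tgt W"
  shows "slides W (Idt y)"
proof -
  obtain \<phi> where "\<And>f. src (R f) = \<phi> (src f)" "\<And>f. tgt (R f) = \<phi> (tgt f)"
    using whiskering_obE[OF whiskering_R] by blast
  then have R_src: "src (R (Idt y)) = tgt W" using assms(4) by simp
  show ?thesis unfolding slides_def
    by (rule intertwines_cong[OF intertwines_Idt[OF assms(1)]
        eqv_sym[OF whiskering_Idt[OF whiskering_L assms(2), unfolded assms(3)]]
        eqv_sym[OF whiskering_Idt[OF whiskering_R assms(2), unfolded R_src]]])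
qed

lemma slides_round_trip:
  assumes "eqv (Cmp V W) (L g)" "eqv (Cmp W V) (R g)" shows "slides W g"
proof -
  note ty = eqv_wf[OF assms(1)] eqv_wf[OF assms(2)]
  have "eqv (Cmp W (L g)) (Cmp W (Cmp V W))"
    by (rule eqv_Cmp[OF eqv_refl eqv_sym[OF assms(1)]]) (use ty in auto)
  also have "eqv \<dots> (Cmp (Cmp W V) W)"
    using ty by (intro eqv_sym[OF eqv_Cmp_assoc]) auto
  also have "eqv \<dots> (Cmp (R g) W)"
    by (rule eqv_Cmp[OF assms(2) eqv_refl]) (use ty in auto)
  finally show ?thesis unfolding slides_def intertwines_def .
qed

lemma intertwines_whiskered_Cmp:
  assumes "intertwines W (L f) (R f) V" "intertwines V (L g) (R g) W'"
  shows "intertwines W (L (Cmp f g)) (R (Cmp f g)) W'"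
proof -
  obtain \<phi> where \<phi>: "inj \<phi>" "\<And>f. src (L f) = \<phi> (src f)" "\<And>f. tgt (L f) = \<phi> (tgt f)"
    using whiskering_obE[OF whiskering_L] by blast
  have "\<phi> (src f) = \<phi> (tgt g)"
    using intertwines_wf[OF assms(1)] intertwines_wf[OF assms(2)] unfolding \<phi>(2,3)[symmetric] by simp
  then have wf: "wf_tm (Cmp f g)"
    using \<phi>(1) intertwines_wf[OF assms(1)] intertwines_wf[OF assms(2)]
    by (simp add: whiskering_wf[OF whiskering_L] inj_eq)
  show ?thesis
    by (rule intertwines_cong[OF intertwines_Cmp[OF assms]
          whiskering_Cmp[OF whiskering_L wf] whiskering_Cmp[OF whiskering_R wf]])
qed

end

lemma blk_pos [simp]: "1 \<le> a \<Longrightarrow> blk a = [Blk a]"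
  by (simp add: blk_def)

lemma ok_ob_blk [simp]: "ok_ob (blk a)"
  by (simp add: blk_def)

lemma tsum_wf:
  "ok_ob x \<Longrightarrow> ok_ob y \<Longrightarrow> \<forall>f\<in>set fs. wf_tm f \<and> src f = x \<and> tgt f = y \<Longrightarrow>
   wf_tm (tsum x y fs) \<and> src (tsum x y fs) = x \<and> tgt (tsum x y fs) = y"
  by (induction fs) auto

lemma omg_wf: "wf_tm (omg a r) \<and> src (omg a r) = blk a \<and> tgt (omg a r) = blk a"
  by (auto simp: omg_def mg_def sp_def dt_def idb_def blk_def)

lemma gpol_wf: "wf_tm (gpol r u) \<and> src (gpol r u) = blk r \<and> tgt (gpol r u) = blk r"
  unfolding gpol_def by (rule tsum_wf) (auto simp: omg_wf)

lemma omg_0: "1 \<le> a \<Longrightarrow> omg a 0 = Idt [Blk a]"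
  by (simp add: omg_def idb_def)

lemma omg_add: "1 \<le> r \<Longrightarrow> 1 \<le> s \<Longrightarrow>
  omg (r + s) r = Cmp (Mg r s) (Cmp (Tns (Dt r) (Idt [Blk s])) (Sp r s))"
  by (simp add: omg_def mg_def sp_def dt_def idb_def)

lemma omg_self_eqv_Dt:
  assumes "1 \<le> a" shows "eqv (omg a a) (Dt a)"
proof -
  have "omg a a = Cmp (Idt [Blk a]) (Cmp (Tns (Dt a) (Idt [])) (Idt [Blk a]))"
    using assms by (simp add: omg_def mg_def sp_def dt_def idb_def blk_def)
  also have "eqv \<dots> (Cmp (Tns (Dt a) (Idt [])) (Idt [Blk a]))"
    using assms eqv_Idt_Cmp[of "Cmp (Tns (Dt a) (Idt [])) (Idt [Blk a])"] by simp
  also have "eqv \<dots> (Tns (Dt a) (Idt []))"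
    using assms eqv_Cmp_Idt[of "Tns (Dt a) (Idt [])"] by simp
  also have "eqv \<dots> (Dt a)"
    using assms by (intro eqv_ax[OF ax.t_unr]) auto
  finally show ?thesis .
qed

lemma gpol_leading_term: "1 \<le> a \<Longrightarrow> gpol a u = Pls (Scl 1 (omg a a))
   (tsum [Blk a] [Blk a] [Scl ((-1)^i * (\<Prod>j<i. u + of_nat j)) (omg a (a-i)). i \<leftarrow> [1..<a+1]])"
  unfolding gpol_def by (simp add: upt_conv_Cons del: upt_Suc)

text \<open>T a stands for the traverse U_{a,u} (or D_{u,a}), and V r s for the pair of traverses
  of thicknesses r and s into which (R9) splits T (r + s).\<close>

locale traverse_family = whiskering_pair x L R
  for x :: "'k::comm_ring_1 ob" and L R +
  fixes u :: 'k and T :: "nat \<Rightarrow> 'k tm" and V :: "nat \<Rightarrow> nat \<Rightarrow> 'k tm"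
  assumes slides_Idt_Blk: "1 \<le> a \<Longrightarrow> slides (T a) (Idt [Blk a])"
    and slides_gpol: "1 \<le> a \<Longrightarrow> slides (T a) (gpol a u)"
    and Mg_intertwines: "1 \<le> r \<Longrightarrow> 1 \<le> s \<Longrightarrow> intertwines (T (r+s)) (L (Mg r s)) (R (Mg r s)) (V r s)"
    and Sp_intertwines: "1 \<le> r \<Longrightarrow> 1 \<le> s \<Longrightarrow> intertwines (V r s) (L (Sp r s)) (R (Sp r s)) (T (r+s))"
    and Dt_slides_pair: "1 \<le> r \<Longrightarrow> 1 \<le> s \<Longrightarrow> slides (T r) (Dt r) \<Longrightarrow>
      slides (V r s) (Tns (Dt r) (Idt [Blk s]))"
begin

lemma slides_omg_below:
  assumes "r < a" and Dt: "\<And>r. 1 \<le> r \<Longrightarrow> r < a \<Longrightarrow> slides (T r) (Dt r)"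
  shows "slides (T a) (omg a r)"
proof (cases "r = 0")
  case True
  then show ?thesis using assms(1) slides_Idt_Blk by (simp add: omg_0)
next
  case False
  define s where "s = a - r"
  have rs: "1 \<le> r" "1 \<le> s" "a = r + s" using False assms(1) by (auto simp: s_def)
  have "intertwines (V r s) (L (Cmp (Tns (Dt r) (Idt [Blk s])) (Sp r s)))
      (R (Cmp (Tns (Dt r) (Idt [Blk s])) (Sp r s))) (T (r+s))"
    using Dt_slides_pair[OF rs(1,2) Dt] Sp_intertwines[OF rs(1,2)] rs
    unfolding slides_def by (intro intertwines_whiskered_Cmp) auto
  then have "slides (T (r+s)) (omg (r+s) r)"
    unfolding slides_def omg_add[OF rs(1,2)]
    by (rule intertwines_whiskered_Cmp[OF Mg_intertwines[OF rs(1,2)]])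
  then show ?thesis using rs(3) by simp
qed

lemma slides_Dt: "1 \<le> a \<Longrightarrow> slides (T a) (Dt a)"
proof (induction a rule: less_induct)
  case (less a)
  let ?lower = "[Scl ((-1)^i * (\<Prod>j<i. u + of_nat j)) (omg a (a-i)). i \<leftarrow> [1..<a+1]]"
  have lower: "slides (T a) (omg a r)" if "r < a" for r
    using that less.IH by (intro slides_omg_below) auto
  have "slides (T a) (Zer [Blk a] [Blk a])"
    using slides_Zer[OF slides_Idt_Blk[OF less.prems]] by simp
  then have "slides (T a) (tsum [Blk a] [Blk a] ?lower)"
    using less.prems by (intro slides_tsum) (auto intro!: slides_Scl lower)
  then have "slides (T a) (Scl 1 (omg a a))"
    using slides_gpol[OF less.prems] less.prems
    by (auto simp: gpol_leading_term intro: slides_cancel)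
  then have "slides (T a) (omg a a)"
    by (rule slides_cong) (intro eqv_ax[OF ax.s_one], simp_all add: omg_wf)
  then show ?case
    by (rule slides_cong[OF _ omg_self_eqv_Dt[OF less.prems]])
qed

lemma slides_omg:
  assumes "1 \<le> a" "r \<le> a" shows "slides (T a) (omg a r)"
proof (cases "r = a")
  case True
  then show ?thesis
    using slides_cong[OF slides_Dt eqv_sym[OF omg_self_eqv_Dt]] assms(1) by simp
next
  case False
  then show ?thesis using assms by (intro slides_omg_below slides_Dt) auto
qed

end

lemma whiskering_pair_Red:
  "whiskering_pair [Red u] (\<lambda>f. Tns f (idr u)) (Tns (idr u))"
  "whiskering_pair [Red u] (Tns (idr u)) (\<lambda>f. Tns f (idr u))"
  by unfold_locales (simp_all add: whiskering_def idr_def)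

definition Up_pair :: "'k \<Rightarrow> nat \<Rightarrow> nat \<Rightarrow> 'k tm" where
  "Up_pair u r s = Cmp (Tns (Up r u) (Idt [Blk s])) (Tns (Idt [Blk r]) (Up s u))"

definition Dn_pair :: "'k \<Rightarrow> nat \<Rightarrow> nat \<Rightarrow> 'k tm" where
  "Dn_pair u r s = Cmp (Tns (Idt [Blk r]) (Dn u s)) (Tns (Dn u r) (Idt [Blk s]))"

lemma Up_pair_Dt:
  fixes u :: "'k::comm_ring_1"
  assumes rs: "1 \<le> r" "1 \<le> s"
    and Dt: "intertwines (Up r u) (Tns (Dt r) (Idt [Red u])) (Tns (Idt [Red u]) (Dt r)) (Up r u)"
  shows "intertwines (Up_pair u r s) (Tns (Tns (Dt r) (Idt [Blk s])) (Idt [Red u]))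
    (Tns (Idt [Red u]) (Tns (Dt r) (Idt [Blk s]))) (Up_pair u r s)"
proof -
  let ?I = "Idt [Red u]" and ?H = "Tns (Dt r) (Idt [Red u, Blk s])"
  have "intertwines (Tns (Idt [Blk r]) (Up s u)) (Tns (Dt r) (Idt [Blk s, Red u])) ?H
      (Tns (Idt [Blk r]) (Up s u))"
    using intertwines_Tns[OF Idt_intertwines[of "Dt r"] intertwines_Idt[of "Up s u"]] rs by simp
  moreover have "eqv (Tns (Dt r) (Idt [Blk s, Red u])) (Tns (Tns (Dt r) (Idt [Blk s])) ?I)"
    using eqv_sym[OF eqv_Tns_Idt_Idt[of "Dt r" "[Blk s]" "[Red u]"]] rs by simp
  moreover have "eqv ?H ?H"
    using rs by (intro eqv_refl) simp
  ultimately have below: "intertwines (Tns (Idt [Blk r]) (Up s u))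
      (Tns (Tns (Dt r) (Idt [Blk s])) ?I) ?H (Tns (Idt [Blk r]) (Up s u))"
    by (rule intertwines_cong)
  have "intertwines (Tns (Up r u) (Idt [Blk s])) (Tns (Tns (Dt r) ?I) (Idt [Blk s]))
      (Tns (Tns ?I (Dt r)) (Idt [Blk s])) (Tns (Up r u) (Idt [Blk s]))"
    using intertwines_Tns[OF Dt Idt_intertwines[of "Idt [Blk s]"]] rs by simp
  moreover have "eqv (Tns (Tns (Dt r) ?I) (Idt [Blk s])) ?H"
    using eqv_Tns_Idt_Idt[of "Dt r" "[Red u]" "[Blk s]"] rs by simp
  moreover have "eqv (Tns (Tns ?I (Dt r)) (Idt [Blk s])) (Tns ?I (Tns (Dt r) (Idt [Blk s])))"
    using rs by (intro eqv_Tns_assoc) simp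
  ultimately have above: "intertwines (Tns (Up r u) (Idt [Blk s])) ?H
      (Tns ?I (Tns (Dt r) (Idt [Blk s]))) (Tns (Up r u) (Idt [Blk s]))"
    by (rule intertwines_cong)
  show ?thesis
    unfolding Up_pair_def by (rule intertwines_Cmp_intertwiners[OF below above])
qed

lemma Dn_pair_Dt:
  fixes u :: "'k::comm_ring_1"
  assumes rs: "1 \<le> r" "1 \<le> s"
    and Dt: "intertwines (Dn u r) (Tns (Idt [Red u]) (Dt r)) (Tns (Dt r) (Idt [Red u])) (Dn u r)"
  shows "intertwines (Dn_pair u r s) (Tns (Idt [Red u]) (Tns (Dt r) (Idt [Blk s])))
    (Tns (Tns (Dt r) (Idt [Blk s])) (Idt [Red u])) (Dn_pair u r s)"
proof -
  let ?I = "Idt [Red u]" and ?H = "Tns (Dt r) (Idt [Red u, Blk s])"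
  have "intertwines (Tns (Dn u r) (Idt [Blk s])) (Tns (Tns ?I (Dt r)) (Idt [Blk s]))
      (Tns (Tns (Dt r) ?I) (Idt [Blk s])) (Tns (Dn u r) (Idt [Blk s]))"
    using intertwines_Tns[OF Dt Idt_intertwines[of "Idt [Blk s]"]] rs by simp
  moreover have "eqv (Tns (Tns ?I (Dt r)) (Idt [Blk s])) (Tns ?I (Tns (Dt r) (Idt [Blk s])))"
    using rs by (intro eqv_Tns_assoc) simp
  moreover have "eqv (Tns (Tns (Dt r) ?I) (Idt [Blk s])) ?H"
    using eqv_Tns_Idt_Idt[of "Dt r" "[Red u]" "[Blk s]"] rs by simp
  ultimately have below: "intertwines (Tns (Dn u r) (Idt [Blk s]))
      (Tns ?I (Tns (Dt r) (Idt [Blk s]))) ?H (Tns (Dn u r) (Idt [Blk s]))"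
    by (rule intertwines_cong)
  have "intertwines (Tns (Idt [Blk r]) (Dn u s)) ?H (Tns (Dt r) (Idt [Blk s, Red u]))
      (Tns (Idt [Blk r]) (Dn u s))"
    using intertwines_Tns[OF Idt_intertwines[of "Dt r"] intertwines_Idt[of "Dn u s"]] rs by simp
  moreover have "eqv ?H ?H"
    using rs by (intro eqv_refl) simp
  moreover have "eqv (Tns (Dt r) (Idt [Blk s, Red u])) (Tns (Tns (Dt r) (Idt [Blk s])) ?I)"
    using eqv_sym[OF eqv_Tns_Idt_Idt[of "Dt r" "[Blk s]" "[Red u]"]] rs by simp
  ultimately have above: "intertwines (Tns (Idt [Blk r]) (Dn u s)) ?H
      (Tns (Tns (Dt r) (Idt [Blk s])) ?I) (Tns (Idt [Blk r]) (Dn u s))"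
    by (rule intertwines_cong)
  show ?thesis
    unfolding Dn_pair_def by (rule intertwines_Cmp_intertwiners[OF below above])
qed

lemma traverse_family_Up:
  "traverse_family [Red u] (\<lambda>f. Tns f (idr u)) (Tns (idr u)) u (\<lambda>a. Up a u) (Up_pair u)"
  unfolding idr_def
proof -
  let ?I = "Idt [Red u]"
  interpret whiskering_pair "[Red u]" "\<lambda>f. Tns f ?I" "Tns ?I"
    using whiskering_pair_Red(1)[of u] unfolding idr_def .
  show "traverse_family [Red u] (\<lambda>f. Tns f ?I) (Tns ?I) u (\<lambda>a. Up a u) (Up_pair u)"
  proof unfold_locales
    fix a :: nat assume "1 \<le> a"
    then show "slides (Up a u) (Idt [Blk a])" by (intro slides_Idt) simp_all
    show "slides (Up a u) (gpol a u)"
      using \<open>1 \<le> a\<close> gpol_wf[of a u]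
      by (intro slides_round_trip[of "Dn u a"] eqv_ax[OF ax.R7a[unfolded idr_def]]
          eqv_ax[OF ax.R7b[unfolded idr_def]]) auto
  next
    fix r s :: nat assume rs: "1 \<le> r" "1 \<le> s"
    show "intertwines (Up (r+s) u) (Tns (Mg r s) ?I) (Tns ?I (Mg r s)) (Up_pair u r s)"
      unfolding intertwines_def Up_pair_def using rs by (intro eqv_ax[OF ax.R9d[unfolded idr_def]]) auto
    have "eqv (Cmp (Up_pair u r s) (Tns (Sp r s) ?I))
        (Cmp (Tns (Up r u) (Idt [Blk s])) (Cmp (Tns (Idt [Blk r]) (Up s u)) (Tns (Sp r s) ?I)))"
      unfolding Up_pair_def using rs by (intro eqv_Cmp_assoc) auto
    also have "eqv \<dots> (Cmp (Tns ?I (Sp r s)) (Up (r+s) u))"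
      using rs by (intro eqv_sym[OF eqv_ax[OF ax.R9a[unfolded idr_def]]]) auto
    finally show "intertwines (Up_pair u r s) (Tns (Sp r s) ?I) (Tns ?I (Sp r s)) (Up (r+s) u)"
      unfolding intertwines_def .
    show "slides (Up r u) (Dt r) \<Longrightarrow> slides (Up_pair u r s) (Tns (Dt r) (Idt [Blk s]))"
      unfolding slides_def by (rule Up_pair_Dt[OF rs])
  qed
qed

lemma traverse_family_Dn:
  "traverse_family [Red u] (Tns (idr u)) (\<lambda>f. Tns f (idr u)) u (\<lambda>a. Dn u a) (Dn_pair u)"
  unfolding idr_def
proof -
  let ?I = "Idt [Red u]"
  interpret whiskering_pair "[Red u]" "Tns ?I" "\<lambda>f. Tns f ?I"
    using whiskering_pair_Red(2)[of u] unfolding idr_def .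
  show "traverse_family [Red u] (Tns ?I) (\<lambda>f. Tns f ?I) u (\<lambda>a. Dn u a) (Dn_pair u)"
  proof unfold_locales
    fix a :: nat assume "1 \<le> a"
    then show "slides (Dn u a) (Idt [Blk a])" by (intro slides_Idt) simp_all
    show "slides (Dn u a) (gpol a u)"
      using \<open>1 \<le> a\<close> gpol_wf[of a u]
      by (intro slides_round_trip[of "Up a u"] eqv_ax[OF ax.R7a[unfolded idr_def]]
          eqv_ax[OF ax.R7b[unfolded idr_def]]) auto
  next
    fix r s :: nat assume rs: "1 \<le> r" "1 \<le> s"
    show "intertwines (Dn u (r+s)) (Tns ?I (Mg r s)) (Tns (Mg r s) ?I) (Dn_pair u r s)"
      unfolding intertwines_def Dn_pair_def using rs by (intro eqv_ax[OF ax.R9c[unfolded idr_def]]) auto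
    have "eqv (Cmp (Dn_pair u r s) (Tns ?I (Sp r s)))
        (Cmp (Tns (Idt [Blk r]) (Dn u s)) (Cmp (Tns (Dn u r) (Idt [Blk s])) (Tns ?I (Sp r s))))"
      unfolding Dn_pair_def using rs by (intro eqv_Cmp_assoc) auto
    also have "eqv \<dots> (Cmp (Tns (Sp r s) ?I) (Dn u (r+s)))"
      using rs by (intro eqv_sym[OF eqv_ax[OF ax.R9b[unfolded idr_def]]]) auto
    finally show "intertwines (Dn_pair u r s) (Tns ?I (Sp r s)) (Tns (Sp r s) ?I) (Dn u (r+s))"
      unfolding intertwines_def .
    show "slides (Dn u r) (Dt r) \<Longrightarrow> slides (Dn_pair u r s) (Tns (Dt r) (Idt [Blk s]))"
      unfolding slides_def by (rule Dn_pair_Dt[OF rs])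
  qed
qed

theorem lemma3p5:
  fixes a r :: nat and u :: "'k::comm_ring_1"
  assumes "a \<ge> 1" and "r \<le> a"
  shows "AS_eq [Blk a, Red u] [Red u, Blk a]
           (Cmp (Up a u) (Tns (omg a r) (idr u)))
           (Cmp (Tns (idr u) (omg a r)) (Up a u))
       \<and> AS_eq [Red u, Blk a] [Blk a, Red u]
           (Cmp (Dn u a) (Tns (idr u) (omg a r)))
           (Cmp (Tns (omg a r) (idr u)) (Dn u a))"
proof -
  have "intertwines (Up a u) (Tns (omg a r) (idr u)) (Tns (idr u) (omg a r)) (Up a u)"
    using traverse_family.slides_omg[OF traverse_family_Up assms]
    unfolding whiskering_pair.slides_def[OF whiskering_pair_Red(1)] .
  moreover have "intertwines (Dn u a) (Tns (idr u) (omg a r)) (Tns (omg a r) (idr u)) (Dn u a)"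
    using traverse_family.slides_omg[OF traverse_family_Dn assms]
    unfolding whiskering_pair.slides_def[OF whiskering_pair_Red(2)] .
  ultimately show ?thesis
    using assms unfolding intertwines_def eqv_def by (simp add: idr_def omg_wf)
qed

end
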